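(* Let $V=\{1,\dots,p\}$ and $F:2^V\to\mathbb{R}$ be submodular, nondecreasing, with $F(\varnothing)=0$ and $F(\{k\})>0$ for all $k$; let $\Omega(w)=f(|w|)$ with $f$ the Lovász extension of $F$. Let $X\in\mathbb{R}^{n\times p}$ be fixed with $X^\top X$ invertible, let $\lambda>0$, and let $y\in\mathbb{R}^n$ be a random vector having a density that is absolutely continuous with respect to Lebesgue measure. Then the minimizer $\hat w$ of $$\min_{w\in\mathbb{R}^p}\frac{1}{2n}\|y-Xw\|_2^2+\lambda\Omega(w)$$ is unique and, with probability one, its support $\mathrm{Supp}(\hat w)$ is a stable set.
   Context: The Lovász extension $f$ of $F$: for $w\in\mathbb{R}_+^p$ with $w_{j_1}\geqslant\cdots\geqslant w_{j_p}\geqslant0$, $f(w)=\sum_k w_{j_k}[F(\{j_1,\dots,j_k\})-F(\{j_1,\dots,j_{k-1}\})]$. $\mathrm{Supp}(w)=\{j:w_j\neq0\}$. A set $A\subset V$ is stable if every strict superset $B\supsetneq A$ satisfies $F(B)>F(A)$. *)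

theory Defs
  imports "HOL-Analysis.Analysis" "HOL-Probability.Probability"
begin

text \<open>Ground set V is the finite type 'p (V = UNIV). Set functions F :: 'p set => real.\<close>

definition submodular :: "('p set \<Rightarrow> real) \<Rightarrow> bool" where
  "submodular F \<longleftrightarrow> (\<forall>A B. F (A \<union> B) + F (A \<inter> B) \<le> F A + F B)"

definition nondecreasing_setfun :: "('p set \<Rightarrow> real) \<Rightarrow> bool" where
  "nondecreasing_setfun F \<longleftrightarrow> (\<forall>A B. A \<subseteq> B \<longrightarrow> F A \<le> F B)"

text \<open>Lovasz extension, following the paper: order the indices j_1,...,j_p so that
  w_{j_1} >= ... >= w_{j_p} (a list enumerating V sorted decreasingly by w; the
  value does not depend on how ties are broken), then
  f(w) = sum_k w_{j_k} [F({j_1..j_k}) - F({j_1..j_{k-1}})].\<close>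

definition decreasing_order :: "real ^ 'p \<Rightarrow> 'p list \<Rightarrow> bool" where
  "decreasing_order w js \<longleftrightarrow> distinct js \<and> set js = UNIV \<and> sorted_wrt (\<lambda>i j. w $ j \<le> w $ i) js"

definition lovasz_ext :: "('p::finite set \<Rightarrow> real) \<Rightarrow> real ^ 'p \<Rightarrow> real" where
  "lovasz_ext F w =
     (let js = (SOME js. decreasing_order w js) in
      \<Sum>k<length js. w $ (js ! k) * (F (set (take (Suc k) js)) - F (set (take k js))))"

definition Omega :: "('p::finite set \<Rightarrow> real) \<Rightarrow> real ^ 'p \<Rightarrow> real" where
  "Omega F w = lovasz_ext F (\<chi> i. \<bar>w $ i\<bar>)"

definition Supp :: "real ^ 'p \<Rightarrow> 'p set" where
  "Supp w = {j. w $ j \<noteq> 0}"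

definition stable_set :: "('p set \<Rightarrow> real) \<Rightarrow> 'p set \<Rightarrow> bool" where
  "stable_set F A \<longleftrightarrow> (\<forall>B. A \<subset> B \<longrightarrow> F B > F A)"

definition objective ::
  "('p::finite set \<Rightarrow> real) \<Rightarrow> real ^ 'p ^ 'n::finite \<Rightarrow> real \<Rightarrow> real ^ 'n \<Rightarrow> real ^ 'p \<Rightarrow> real" where
  "objective F X lam y w = (1 / (2 * real CARD('n))) * (norm (y - X *v w))\<^sup>2 + lam * Omega F w"

definition is_minimizer ::
  "('p::finite set \<Rightarrow> real) \<Rightarrow> real ^ 'p ^ 'n::finite \<Rightarrow> real \<Rightarrow> real ^ 'n \<Rightarrow> real ^ 'p \<Rightarrow> bool" where
  "is_minimizer F X lam y w \<longleftrightarrow> (\<forall>v. objective F X lam y w \<le> objective F X lam y v)"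

end

theory Submission
  imports Defs
begin

text \<open>
  For an ordering of V, the greedy vector s_i = F(elements up to i) - F(elements before i)
  lies in the submodular polyhedron, and an Abel summation shows that w \<bullet> s is maximal over
  that polyhedron when the ordering sorts w decreasingly. Hence the Lovasz extension is a
  maximum of linear forms, \<Omega> is convex and coercive, and the objective, strictly convex
  because X is injective, has a unique minimiser.

  If the support J of the minimiser w is not stable, some k \<notin> J has F(J \<union> {k}) = F(J), so
  the greedy vector of an ordering listing J first and then k vanishes at k. Along a direction
  z with z_k = 1 that respects the signs and ties of w on J, \<Omega> is then affine near w.
  Choosing Xz orthogonal to the image of the space of sign-and-tie respecting vectors (which
  contains w), the first-order condition becomes an equation (Xz) \<bullet> y = c that no longer
  involves w. It depends only on countably much combinatorial data, so y lies in a countable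
  union of hyperplanes, a Lebesgue null set.
\<close>

definition greedy_vector :: "('p::finite set \<Rightarrow> real) \<Rightarrow> 'p list \<Rightarrow> real ^ 'p" where
  "greedy_vector F js =
     (\<chi> i. F (insert i (set (takeWhile (\<lambda>j. j \<noteq> i) js))) - F (set (takeWhile (\<lambda>j. j \<noteq> i) js)))"

lemma takeWhile_neq_nth:
  assumes "distinct js" and "k < length js"
  shows "takeWhile (\<lambda>j. j \<noteq> js ! k) js = take k js"
  using assms by (intro takeWhile_eq_take_P_nth) (auto simp: nth_eq_iff_index_eq)

lemma greedy_vector_nth:
  assumes "distinct js" and "k < length js"
  shows "greedy_vector F js $ (js ! k) = F (set (take (Suc k) js)) - F (set (take k js))"
  using assms by (simp add: greedy_vector_def takeWhile_neq_nth take_Suc_conv_app_nth)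

lemma greedy_vector_snoc:
  assumes "i \<in> set js"
  shows "greedy_vector F (js @ [x]) $ i = greedy_vector F js $ i"
  using assms by (simp add: greedy_vector_def takeWhile_append1[where x = i])

lemma greedy_vector_snoc_last:
  assumes "x \<notin> set js"
  shows "greedy_vector F (js @ [x]) $ x = F (insert x (set js)) - F (set js)"
  using assms by (simp add: greedy_vector_def takeWhile_append)

lemma greedy_vector_nonneg:
  assumes "nondecreasing_setfun F"
  shows "0 \<le> greedy_vector F js $ i"
  using assms by (auto simp: greedy_vector_def nondecreasing_setfun_def subset_insertI)

lemma inner_greedy_vector:
  assumes "distinct js" and "set js = UNIV"
  shows "w \<bullet> greedy_vector F js =
    (\<Sum>k<length js. w $ (js ! k) * (F (set (take (Suc k) js)) - F (set (take k js))))"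
proof -
  have "w \<bullet> greedy_vector F js = (\<Sum>i\<in>set js. w $ i * greedy_vector F js $ i)"
    using assms(2) by (simp add: inner_vec_def)
  also have "\<dots> = (\<Sum>k<length js. w $ (js ! k) * greedy_vector F js $ (js ! k))"
    using assms(1) by (simp add: sum.distinct_set_conv_list sum_list_sum_nth atLeast0LessThan)
  also have "\<dots> = (\<Sum>k<length js. w $ (js ! k) * (F (set (take (Suc k) js)) - F (set (take k js))))"
    using assms(1) by (intro sum.cong) (simp_all add: greedy_vector_nth)
  finally show ?thesis .
qed

lemma sum_greedy_vector_le:
  assumes sub: "submodular F" and F0: "F {} = 0"
    and "distinct js" and "A \<subseteq> set js"
  shows "(\<Sum>i\<in>A. greedy_vector F js $ i) \<le> F A"
  using assms(3,4)
proof (induction js arbitrary: A rule: rev_induct)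
  case Nil
  then show ?case using F0 by simp
next
  case (snoc x js)
  let ?S = "set js"
  have x: "x \<notin> ?S" and d: "distinct js" using snoc.prems(1) by auto
  have IH: "(\<Sum>i\<in>A - {x}. greedy_vector F js $ i) \<le> F (A - {x})"
    using snoc.IH[OF d, of "A - {x}"] snoc.prems(2) by auto
  have snoc_eq: "(\<Sum>i\<in>A - {x}. greedy_vector F (js @ [x]) $ i) = (\<Sum>i\<in>A - {x}. greedy_vector F js $ i)"
    using snoc.prems(2) by (intro sum.cong) (auto simp: greedy_vector_snoc)
  show ?case
  proof (cases "x \<in> A")
    case False
    then show ?thesis using IH snoc_eq by simp
  next
    case True
    have "F (A \<union> ?S) + F (A \<inter> ?S) \<le> F A + F ?S"
      using sub by (simp add: submodular_def)
    moreover have "A \<union> ?S = insert x ?S" and "A \<inter> ?S = A - {x}"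
      using True x snoc.prems(2) by auto
    moreover have "(\<Sum>i\<in>A. greedy_vector F (js @ [x]) $ i)
        = greedy_vector F (js @ [x]) $ x + (\<Sum>i\<in>A - {x}. greedy_vector F (js @ [x]) $ i)"
      using True by (simp add: sum.remove)
    ultimately show ?thesis
      using IH snoc_eq greedy_vector_snoc_last[OF x, of F] by simp
  qed
qed

text \<open>Abel summation along a decreasing ordering. The lower bound c on the weights is what
  makes the induction on prefixes go through; c = 0 gives the inequality itself.\<close>

lemma greedy_vector_excess:
  assumes F0: "F {} = 0" and poly: "\<And>A. (\<Sum>i\<in>A. s $ i) \<le> F A"
    and "distinct js" and "sorted_wrt (\<lambda>i j. w $ j \<le> w $ i) js"
    and "0 \<le> c" and "\<And>i. i \<in> set js \<Longrightarrow> c \<le> w $ i"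
  shows "c * (F (set js) - (\<Sum>i\<in>set js. s $ i))
         \<le> (\<Sum>i\<in>set js. w $ i * (greedy_vector F js $ i - s $ i))"
  using assms(3-6)
proof (induction js arbitrary: c rule: rev_induct)
  case Nil
  then show ?case using F0 by simp
next
  case (snoc x js)
  let ?S = "set js" and ?g = "greedy_vector F js" and ?g' = "greedy_vector F (js @ [x])"
  have x: "x \<notin> ?S" and d: "distinct js" using snoc.prems(1) by auto
  have "c \<le> w $ x" using snoc.prems(4) by simp
  have below: "w $ x \<le> w $ i" if "i \<in> ?S" for i
    using snoc.prems(2) that by (simp add: sorted_wrt_append)
  have IH: "w $ x * (F ?S - (\<Sum>i\<in>?S. s $ i)) \<le> (\<Sum>i\<in>?S. w $ i * (?g $ i - s $ i))"
    using snoc.IH[OF d, of "w $ x"] snoc.prems(2,3) \<open>c \<le> w $ x\<close> below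
    by (simp add: sorted_wrt_append)
  have "(\<Sum>i\<in>?S. w $ i * (?g' $ i - s $ i)) = (\<Sum>i\<in>?S. w $ i * (?g $ i - s $ i))"
    by (intro sum.cong) (simp_all add: greedy_vector_snoc)
  then have rhs: "(\<Sum>i\<in>set (js @ [x]). w $ i * (?g' $ i - s $ i)) =
      (\<Sum>i\<in>?S. w $ i * (?g $ i - s $ i)) + w $ x * (F (insert x ?S) - F ?S - s $ x)"
    using x by (simp add: greedy_vector_snoc_last)
  have slack: "0 \<le> F (insert x ?S) - (\<Sum>i\<in>insert x ?S. s $ i)"
    using poly[of "insert x ?S"] by simp
  have "c * (F (insert x ?S) - (\<Sum>i\<in>insert x ?S. s $ i))
        \<le> w $ x * (F (insert x ?S) - (\<Sum>i\<in>insert x ?S. s $ i))"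
    using mult_right_mono[OF \<open>c \<le> w $ x\<close> slack] .
  also have "\<dots> = w $ x * (F ?S - (\<Sum>i\<in>?S. s $ i)) + w $ x * (F (insert x ?S) - F ?S - s $ x)"
    using x by (simp add: algebra_simps)
  finally show ?case using IH rhs by simp
qed

lemma inner_le_inner_greedy_vector:
  assumes F0: "F {} = 0" and poly: "\<And>A. (\<Sum>i\<in>A. s $ i) \<le> F A"
    and ord: "decreasing_order w js" and nonneg: "\<And>i. 0 \<le> w $ i"
  shows "s \<bullet> w \<le> w \<bullet> greedy_vector F js"
proof -
  have "0 \<le> (\<Sum>i\<in>UNIV. w $ i * (greedy_vector F js $ i - s $ i))"
    using greedy_vector_excess[OF F0 poly, of js w 0] ord nonneg
    by (simp add: decreasing_order_def)
  then show ?thesis by (simp add: inner_vec_def algebra_simps sum_subtractf)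
qed

lemma decreasing_order_exists: "\<exists>js. decreasing_order (w :: real ^ 'p::finite) js"
proof -
  obtain xs :: "'p list" where "set xs = UNIV" and "distinct xs"
    using finite_distinct_list[OF finite_class.finite_UNIV] by blast
  moreover have "sorted (map (\<lambda>i. - w $ i) (sort_key (\<lambda>i. - w $ i) xs))"
    by simp
  ultimately show ?thesis
    unfolding decreasing_order_def
    by (intro exI[of _ "sort_key (\<lambda>i. - w $ i) xs"]) (simp add: sorted_map)
qed

context
  fixes F :: "'p::finite set \<Rightarrow> real"
  assumes sub: "submodular F" and F0: "F {} = 0"
begin

lemma lovasz_ext_eq_inner:
  assumes ord: "decreasing_order w js" and nonneg: "\<And>i. 0 \<le> w $ i"
  shows "lovasz_ext F w = w \<bullet> greedy_vector F js"
proof -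
  define js0 where "js0 = (SOME js. decreasing_order w js)"
  have ord0: "decreasing_order w js0"
    unfolding js0_def using decreasing_order_exists by (rule someI_ex)
  have "lovasz_ext F w = w \<bullet> greedy_vector F js0"
    unfolding lovasz_ext_def Let_def js0_def[symmetric]
    using ord0 by (simp add: inner_greedy_vector decreasing_order_def)
  moreover have "greedy_vector F js0 \<bullet> w \<le> w \<bullet> greedy_vector F js"
    and "greedy_vector F js \<bullet> w \<le> w \<bullet> greedy_vector F js0"
    using ord ord0 nonneg sum_greedy_vector_le[OF sub F0]
    by (auto intro!: inner_le_inner_greedy_vector[where F = F, OF F0] simp: decreasing_order_def)
  ultimately show ?thesis by (simp add: inner_commute)
qed

lemma inner_greedy_vector_le_lovasz_ext:
  assumes "distinct js" and "set js = UNIV" and nonneg: "\<And>i. 0 \<le> w $ i"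
  shows "w \<bullet> greedy_vector F js \<le> lovasz_ext F w"
proof -
  obtain js0 where ord0: "decreasing_order w js0" using decreasing_order_exists by blast
  have poly: "(\<Sum>i\<in>A. greedy_vector F js $ i) \<le> F A" for A
    using sum_greedy_vector_le[OF sub F0 assms(1)] assms(2) by simp
  have "greedy_vector F js \<bullet> w \<le> w \<bullet> greedy_vector F js0"
    by (rule inner_le_inner_greedy_vector[OF F0 poly ord0 nonneg])
  then show ?thesis using lovasz_ext_eq_inner[OF ord0 nonneg] by (simp add: inner_commute)
qed

end

definition vec_abs :: "real ^ 'p \<Rightarrow> real ^ 'p" where
  "vec_abs w = (\<chi> i. \<bar>w $ i\<bar>)"

context
  fixes F :: "'p::finite set \<Rightarrow> real"
  assumes sub: "submodular F" and mono: "nondecreasing_setfun F" and F0: "F {} = 0"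
begin

lemma Omega_eq_sum:
  assumes "decreasing_order (vec_abs w) js"
  shows "Omega F w = (\<Sum>i\<in>UNIV. \<bar>w $ i\<bar> * greedy_vector F js $ i)"
  using lovasz_ext_eq_inner[OF sub F0 assms]
  by (simp add: Omega_def vec_abs_def inner_vec_def)

lemma sum_le_Omega:
  assumes "distinct js" and "set js = UNIV"
  shows "(\<Sum>i\<in>UNIV. \<bar>w $ i\<bar> * greedy_vector F js $ i) \<le> Omega F w"
  using inner_greedy_vector_le_lovasz_ext[OF sub F0 assms, of "vec_abs w"]
  by (simp add: Omega_def vec_abs_def inner_vec_def)

lemma Omega_nonneg: "0 \<le> Omega F w"
proof -
  obtain js where "decreasing_order (vec_abs w) js" using decreasing_order_exists by blast
  then show ?thesis by (simp add: Omega_eq_sum sum_nonneg greedy_vector_nonneg[OF mono])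
qed

lemma singleton_le_Omega: "F {k} * \<bar>w $ k\<bar> \<le> Omega F w"
proof -
  obtain xs :: "'p list" where xs: "set xs = UNIV" "distinct xs"
    using finite_distinct_list[OF finite_class.finite_UNIV] by blast
  define js where "js = k # filter (\<lambda>j. j \<noteq> k) xs"
  have "greedy_vector F js $ k = F {k}" using F0 by (simp add: greedy_vector_def js_def)
  then have "F {k} * \<bar>w $ k\<bar> \<le> (\<Sum>i\<in>UNIV. \<bar>w $ i\<bar> * greedy_vector F js $ i)"
    by (metis (no_types, lifting) member_le_sum UNIV_I abs_ge_zero finite_class.finite_UNIV
        greedy_vector_nonneg[OF mono] mult.commute mult_nonneg_nonneg)
  also have "\<dots> \<le> Omega F w" using xs by (intro sum_le_Omega) (auto simp: js_def)
  finally show ?thesis .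
qed

lemma convex_on_Omega: "convex_on UNIV (Omega F)"
proof (rule convex_onI)
  fix t :: real and a b :: "real ^ 'p"
  assume t: "0 < t" "t < 1"
  obtain js where ord: "decreasing_order (vec_abs ((1 - t) *\<^sub>R a + t *\<^sub>R b)) js"
    using decreasing_order_exists by blast
  let ?g = "greedy_vector F js"
  have "Omega F ((1 - t) *\<^sub>R a + t *\<^sub>R b) = (\<Sum>i\<in>UNIV. \<bar>(1 - t) * a $ i + t * b $ i\<bar> * ?g $ i)"
    using Omega_eq_sum[OF ord] by simp
  also have "\<dots> \<le> (\<Sum>i\<in>UNIV. ((1 - t) * \<bar>a $ i\<bar> + t * \<bar>b $ i\<bar>) * ?g $ i)"
  proof (rule sum_mono, rule mult_right_mono)
    fix i
    show "\<bar>(1 - t) * a $ i + t * b $ i\<bar> \<le> (1 - t) * \<bar>a $ i\<bar> + t * \<bar>b $ i\<bar>"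
      using t abs_triangle_ineq[of "(1 - t) * a $ i" "t * b $ i"] by (simp add: abs_mult)
  qed (rule greedy_vector_nonneg[OF mono])
  also have "\<dots> = (1 - t) * (\<Sum>i\<in>UNIV. \<bar>a $ i\<bar> * ?g $ i) + t * (\<Sum>i\<in>UNIV. \<bar>b $ i\<bar> * ?g $ i)"
    by (simp add: distrib_right sum.distrib sum_distrib_left mult.assoc)
  also have "\<dots> \<le> (1 - t) * Omega F a + t * Omega F b"
    using t ord by (intro add_mono mult_left_mono sum_le_Omega) (auto simp: decreasing_order_def)
  finally show "Omega F ((1 - t) *\<^sub>R a + t *\<^sub>R b) \<le> (1 - t) * Omega F a + t * Omega F b" .
qed simp

lemma continuous_on_Omega: "continuous_on S (Omega F)"
  using convex_on_continuous[OF open_UNIV convex_on_Omega] continuous_on_subset by blast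

lemma Omega_coercive:
  assumes Fk: "\<And>k. F {k} > 0"
  shows "\<exists>c>0. \<forall>w. c * norm w \<le> Omega F w"
proof -
  define m where "m = Min (range (\<lambda>k::'p. F {k}))"
  have "m \<in> range (\<lambda>k::'p. F {k})" unfolding m_def by (rule Min_in) auto
  then have "m > 0" using Fk by auto
  have m_le: "m \<le> F {k}" for k unfolding m_def by (rule Min_le) auto
  have "m * norm w \<le> real CARD('p) * Omega F w" for w
  proof -
    have "m * norm w \<le> (\<Sum>i\<in>UNIV. m * \<bar>w $ i\<bar>)"
      using mult_left_mono[OF norm_le_l1_cart[of w], of m] \<open>m > 0\<close> by (simp add: sum_distrib_left)
    also have "\<dots> \<le> (\<Sum>i\<in>(UNIV::'p set). Omega F w)"
    proof (rule sum_mono)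
      fix i
      have "m * \<bar>w $ i\<bar> \<le> F {i} * \<bar>w $ i\<bar>" using m_le[of i] by (simp add: mult_right_mono)
      also have "\<dots> \<le> Omega F w" by (rule singleton_le_Omega)
      finally show "m * \<bar>w $ i\<bar> \<le> Omega F w" .
    qed
    finally show ?thesis by simp
  qed
  then have "m / real CARD('p) * norm w \<le> Omega F w" for w
    by (simp add: divide_le_eq mult.commute)
  then show ?thesis using \<open>m > 0\<close> by (intro exI[of _ "m / real CARD('p)"]) simp
qed

end

lemma Gram_invertible_imp_kernel_zero:
  fixes X :: "real ^ 'p::finite ^ 'n::finite"
  assumes "invertible (transpose X ** X)" and "X *v v = 0"
  shows "v = 0"
proof -
  obtain B where B: "B ** (transpose X ** X) = mat 1"
    using assms(1) unfolding invertible_def by blast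
  have "v = (B ** (transpose X ** X)) *v v" by (simp add: B)
  also have "\<dots> = B *v (transpose X *v (X *v v))" by (simp add: matrix_vector_mul_assoc)
  finally show ?thesis by (simp add: assms(2))
qed

context
  fixes F :: "'p::finite set \<Rightarrow> real" and X :: "real ^ 'p ^ 'n::finite" and lam :: real
  assumes sub: "submodular F" and mono: "nondecreasing_setfun F" and F0: "F {} = 0"
    and Fk: "\<And>k. F {k} > 0" and inv: "invertible (transpose X ** X)" and lam: "lam > 0"
begin

lemma minimizer_exists: "\<exists>w. is_minimizer F X lam y w"
proof -
  obtain c where c: "c > 0" "\<And>w. c * norm w \<le> Omega F w"
    using Omega_coercive[OF sub mono F0 Fk] by blast
  let ?f = "objective F X lam y"
  define R where "R = ?f 0 / (lam * c)"
  have "0 \<le> ?f 0"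
    unfolding objective_def using Omega_nonneg[OF sub mono F0] lam by simp
  then have "0 \<le> R" unfolding R_def using lam c by simp
  have "continuous_on (cball 0 R) ?f"
    unfolding objective_def
    by (intro continuous_intros continuous_on_Omega[OF sub mono F0])
  then obtain x where x: "x \<in> cball 0 R" "\<And>v. v \<in> cball 0 R \<Longrightarrow> ?f x \<le> ?f v"
    using continuous_attains_inf[OF compact_cball, of 0 R ?f] \<open>0 \<le> R\<close> by auto
  have "?f x \<le> ?f v" for v
  proof (cases "v \<in> cball 0 R")
    case False
    then have "lam * c * R < lam * c * norm v" using lam c by simp
    also have "\<dots> \<le> lam * Omega F v" using c(2)[of v] lam by (simp add: mult.assoc)
    also have "\<dots> \<le> ?f v" unfolding objective_def by simp
    finally have "?f 0 < ?f v" unfolding R_def using lam c by simp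
    moreover have "?f x \<le> ?f 0" using x \<open>0 \<le> R\<close> by simp
    ultimately show ?thesis by simp
  qed (use x in blast)
  then show ?thesis unfolding is_minimizer_def by blast
qed

lemma minimizer_unique:
  assumes w1: "is_minimizer F X lam y w1" and w2: "is_minimizer F X lam y w2"
  shows "w1 = w2"
proof (rule ccontr)
  assume "w1 \<noteq> w2"
  let ?f = "objective F X lam y"
  define c where "c = 1 / (2 * real CARD('n))"
  define a where "a = y - X *v w1"
  define b where "b = y - X *v w2"
  define m where "m = (1 - 1/2) *\<^sub>R w1 + (1/2) *\<^sub>R w2"
  have "X *v (w2 - w1) \<noteq> 0"
    using Gram_invertible_imp_kernel_zero[OF inv] \<open>w1 \<noteq> w2\<close> by force
  then have "a - b \<noteq> 0"
    by (simp add: a_def b_def matrix_vector_mult_diff_distrib)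
  have "y - X *v m = (1/2) *\<^sub>R (a + b)"
    by (simp add: vec_eq_iff m_def a_def b_def matrix_vector_mult_scaleR
        matrix_vector_right_distrib algebra_simps)
  moreover have "(norm ((1/2) *\<^sub>R (a + b)))\<^sup>2 = ((norm a)\<^sup>2 + (norm b)\<^sup>2) / 2 - (norm (a - b))\<^sup>2 / 4"
    by (simp add: power2_norm_eq_inner inner_add inner_diff algebra_simps inner_commute; simp add: field_simps)
  ultimately have quadratic: "(norm (y - X *v m))\<^sup>2 = ((norm a)\<^sup>2 + (norm b)\<^sup>2) / 2 - (norm (a - b))\<^sup>2 / 4"
    by simp
  have "Omega F m \<le> (Omega F w1 + Omega F w2) / 2"
    using convex_onD[OF convex_on_Omega[OF sub mono F0], of "1/2" w1 w2] by (simp add: m_def)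
  then have "?f m \<le> c * (((norm a)\<^sup>2 + (norm b)\<^sup>2) / 2 - (norm (a - b))\<^sup>2 / 4)
      + lam * ((Omega F w1 + Omega F w2) / 2)"
    using quadratic lam by (simp add: objective_def c_def)
  also have "\<dots> = (?f w1 + ?f w2) / 2 - c * (norm (a - b))\<^sup>2 / 4"
    by (simp add: objective_def c_def a_def b_def add_divide_distrib diff_divide_distrib
        right_diff_distrib distrib_left)
  also have "\<dots> < ?f w1"
  proof -
    have "c * (norm (a - b))\<^sup>2 > 0" using \<open>a - b \<noteq> 0\<close> by (simp add: c_def)
    moreover have "?f w1 = ?f w2" using w1 w2 unfolding is_minimizer_def by (meson order.antisym)
    ultimately show ?thesis by simp
  qed
  finally show False using w1 unfolding is_minimizer_def by (meson not_le)
qed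

lemma ex1_minimizer: "\<exists>!w. is_minimizer F X lam y w"
  using minimizer_exists minimizer_unique by blast

end

definition sign_pattern :: "'p::finite set \<Rightarrow> 'p set \<Rightarrow> real ^ 'p" where
  "sign_pattern J P = (\<chi> i. if i \<in> J then (if i \<in> P then 1 else -1) else 0)"

lemma sign_pattern_Supp: "sign_pattern (Supp w) {i. 0 < w $ i} = (\<chi> i. sgn (w $ i))"
  by (simp add: vec_eq_iff sign_pattern_def Supp_def sgn_if)

definition tie_space :: "real ^ 'p::finite \<Rightarrow> ('p \<times> 'p) set \<Rightarrow> (real ^ 'p) set" where
  "tie_space \<sigma> E = {v. \<forall>i j. (\<sigma> $ i = 0 \<longrightarrow> v $ i = 0) \<and>
     (\<sigma> $ i \<noteq> 0 \<longrightarrow> \<sigma> $ j \<noteq> 0 \<longrightarrow> (i, j) \<in> E \<longrightarrow> \<sigma> $ i * v $ i = \<sigma> $ j * v $ j)}"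

lemma tie_spaceI:
  assumes "\<And>i. \<sigma> $ i = 0 \<Longrightarrow> v $ i = 0"
    and "\<And>i j. \<sigma> $ i \<noteq> 0 \<Longrightarrow> \<sigma> $ j \<noteq> 0 \<Longrightarrow> (i, j) \<in> E \<Longrightarrow> \<sigma> $ i * v $ i = \<sigma> $ j * v $ j"
  shows "v \<in> tie_space \<sigma> E"
  using assms unfolding tie_space_def by blast

lemma tie_spaceD:
  assumes "v \<in> tie_space \<sigma> E"
  shows "\<sigma> $ i = 0 \<Longrightarrow> v $ i = 0"
    and "\<sigma> $ i \<noteq> 0 \<Longrightarrow> \<sigma> $ j \<noteq> 0 \<Longrightarrow> (i, j) \<in> E \<Longrightarrow> \<sigma> $ i * v $ i = \<sigma> $ j * v $ j"
  using assms unfolding tie_space_def by blast+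

lemma sgn_tie_space:
  fixes w :: "real ^ 'p::finite"
  shows "w \<in> tie_space (\<chi> i. sgn (w $ i)) {(i, j). \<bar>w $ i\<bar> = \<bar>w $ j\<bar>}"
proof (rule tie_spaceI)
  have abs_eq: "sgn (w $ i) * w $ i = \<bar>w $ i\<bar>" for i by (simp add: abs_sgn mult.commute)
  show "(\<chi> i. sgn (w $ i)) $ i * w $ i = (\<chi> i. sgn (w $ i)) $ j * w $ j"
    if "(i, j) \<in> {(i, j). \<bar>w $ i\<bar> = \<bar>w $ j\<bar>}" for i j
    using that by (simp add: abs_eq)
qed (simp add: sgn_eq_0_iff)

lemma sgn_tie_space_axis_shiftD:
  fixes w z :: "real ^ 'p::finite"
  assumes tie: "z - axis k 1 \<in> tie_space (\<chi> i. sgn (w $ i)) {(i, j). \<bar>w $ i\<bar> = \<bar>w $ j\<bar>}"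
    and k: "k \<notin> Supp w"
  shows "\<And>i. i \<notin> Supp w \<Longrightarrow> i \<noteq> k \<Longrightarrow> z $ i = 0"
    and "\<And>i j. i \<in> Supp w \<Longrightarrow> j \<in> Supp w \<Longrightarrow> \<bar>w $ i\<bar> = \<bar>w $ j\<bar> \<Longrightarrow>
      sgn (w $ i) * z $ i = sgn (w $ j) * z $ j"
proof -
  fix i assume "i \<notin> Supp w" "i \<noteq> k"
  then have "(z - axis k 1) $ i = 0" by (intro tie_spaceD(1)[OF tie]) (simp add: Supp_def)
  then show "z $ i = 0" using \<open>i \<noteq> k\<close> by (simp add: axis_def)
next
  fix i j assume that: "i \<in> Supp w" "j \<in> Supp w" "\<bar>w $ i\<bar> = \<bar>w $ j\<bar>"
  then have "sgn (w $ i) * (z - axis k 1) $ i = sgn (w $ j) * (z - axis k 1) $ j"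
    using tie_spaceD(2)[OF tie, of i j] by (simp add: Supp_def sgn_eq_0_iff)
  moreover have "axis k 1 $ i = (0::real)" "axis k 1 $ j = (0::real)"
    using that k by (auto simp: axis_def)
  ultimately show "sgn (w $ i) * z $ i = sgn (w $ j) * z $ j" by simp
qed

lemma subspace_tie_space: "subspace (tie_space \<sigma> E)"
  unfolding subspace_def tie_space_def by (auto simp: algebra_simps)

definition escape_direction ::
  "real ^ 'p ^ 'n::finite \<Rightarrow> real ^ 'p::finite \<Rightarrow> ('p \<times> 'p) set \<Rightarrow> 'p \<Rightarrow> real ^ 'p" where
  "escape_direction X \<sigma> E k = (SOME z. z - axis k 1 \<in> tie_space \<sigma> E \<and>
     (\<forall>v\<in>tie_space \<sigma> E. (X *v z) \<bullet> (X *v v) = 0))"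

lemma escape_direction_exists:
  fixes X :: "real ^ 'p::finite ^ 'n::finite"
  shows "\<exists>z. z - axis k 1 \<in> tie_space \<sigma> E \<and> (\<forall>v\<in>tie_space \<sigma> E. (X *v z) \<bullet> (X *v v) = 0)"
proof -
  let ?L = "tie_space \<sigma> E"
  obtain p r where p: "p \<in> span ((*v) X ` ?L)"
    and r: "\<And>u. u \<in> span ((*v) X ` ?L) \<Longrightarrow> orthogonal r u"
    and decomp: "X *v axis k 1 = p + r"
    using orthogonal_subspace_decomp_exists by metis
  have span_image: "span ((*v) X ` ?L) = (*v) X ` ?L"
    by (simp add: span_eq_iff linear_subspace_image[OF matrix_vector_mul_linear subspace_tie_space])
  obtain l where l: "l \<in> ?L" "p = X *v l" using p unfolding span_image by auto
  have "X *v (axis k 1 - l) = r" using decomp l(2) by (simp add: matrix_vector_mult_diff_distrib)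
  then show ?thesis
    using l(1) r subspace_tie_space[of \<sigma> E]
    by (intro exI[of _ "axis k 1 - l"]) (auto simp: orthogonal_def span_base subspace_neg)
qed

lemma escape_direction:
  fixes X :: "real ^ 'p::finite ^ 'n::finite"
  shows "escape_direction X \<sigma> E k - axis k 1 \<in> tie_space \<sigma> E"
    and "v \<in> tie_space \<sigma> E \<Longrightarrow> (X *v escape_direction X \<sigma> E k) \<bullet> (X *v v) = 0"
  using someI_ex[OF escape_direction_exists[of k \<sigma> E X]]
  unfolding escape_direction_def by auto

lemma escape_direction_nonzero:
  fixes X :: "real ^ 'p::finite ^ 'n::finite"
  assumes "invertible (transpose X ** X)" and "\<sigma> $ k = 0"
  shows "X *v escape_direction X \<sigma> E k \<noteq> 0"
proof
  assume "X *v escape_direction X \<sigma> E k = 0"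
  then have "escape_direction X \<sigma> E k = 0" by (rule Gram_invertible_imp_kernel_zero[OF assms(1)])
  then show False
    using escape_direction(1)[of X \<sigma> E k] assms(2) by (force simp: tie_space_def axis_def)
qed

text \<open>The hyperplane on which the response must lie for the first-order optimality
  condition to hold along the escape direction.\<close>

definition stationary_hyperplane ::
  "('p::finite set \<Rightarrow> real) \<Rightarrow> real ^ 'p ^ 'n::finite \<Rightarrow> real \<Rightarrow> real ^ 'p \<Rightarrow> ('p \<times> 'p) set \<Rightarrow>
    'p \<Rightarrow> 'p list \<Rightarrow> (real ^ 'n) set" where
  "stationary_hyperplane F X lam \<sigma> E k js =
     {y. (X *v escape_direction X \<sigma> E k) \<bullet> y =
         real CARD('n) * lam * ((\<chi> i. \<sigma> $ i * greedy_vector F js $ i) \<bullet> escape_direction X \<sigma> E k)}"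

text \<open>Sign vectors are indexed by their support J and positive part P, so that the union
  ranges over countable types only.\<close>

definition exceptional_responses ::
  "('p::finite set \<Rightarrow> real) \<Rightarrow> real ^ 'p ^ 'n::finite \<Rightarrow> real \<Rightarrow> (real ^ 'n) set" where
  "exceptional_responses F X lam =
     (\<Union>J. \<Union>P. \<Union>E. \<Union>k\<in>-J. \<Union>js. stationary_hyperplane F X lam (sign_pattern J P) E k js)"

lemma hyperplane_null_sets_lborel:
  fixes a :: "'a::euclidean_space"
  assumes "a \<noteq> 0"
  shows "{y. a \<bullet> y = b} \<in> null_sets lborel"
proof -
  have "{y. a \<bullet> y = b} \<in> null_sets lebesgue"
    using negligible_hyperplane[of a b] assms by (simp add: negligible_iff_null_sets)
  moreover have "{y. a \<bullet> y = b} \<in> sets lborel"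
    unfolding sets_lborel by (intro borel_closed closed_hyperplane)
  ultimately show ?thesis using null_sets_completion_iff by metis
qed

lemma exceptional_responses_null:
  fixes X :: "real ^ 'p::finite ^ 'n::finite"
  assumes "invertible (transpose X ** X)"
  shows "exceptional_responses F X lam \<in> null_sets lborel"
proof -
  have "stationary_hyperplane F X lam (sign_pattern J P) E k js \<in> null_sets lborel" if "k \<notin> J" for J P E k js
    using that escape_direction_nonzero[OF assms]
    by (simp add: stationary_hyperplane_def hyperplane_null_sets_lborel sign_pattern_def)
  then show ?thesis
    unfolding exceptional_responses_def by (auto intro!: null_sets_UN')
qed

lemma exists_redundant_element:
  assumes mono: "nondecreasing_setfun F" and "\<not> stable_set F J"
  shows "\<exists>k. k \<notin> J \<and> F (insert k J) = F J"
proof -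
  obtain B where "J \<subset> B" and "\<not> F J < F B" using assms(2) unfolding stable_set_def by blast
  then obtain k where "k \<in> B" "k \<notin> J" by blast
  have "insert k J \<subseteq> B" using \<open>J \<subset> B\<close> \<open>k \<in> B\<close> by auto
  then have "F J \<le> F (insert k J)" and "F (insert k J) \<le> F B"
    using mono unfolding nondecreasing_setfun_def by (blast intro: subset_insertI)+
  then show ?thesis using \<open>\<not> F J < F B\<close> \<open>k \<notin> J\<close> by (intro exI[of _ k]) auto
qed

lemma decreasing_order_support_first:
  fixes w :: "real ^ 'p::finite"
  assumes "k \<notin> Supp w"
  shows "\<exists>as bs. decreasing_order (vec_abs w) (as @ k # bs) \<and> set as = Supp w"
proof -
  obtain xs where xs: "set xs = Supp w" "distinct xs"
    using finite_distinct_list[of "Supp w"] by auto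
  obtain bs where bs: "set bs = - insert k (Supp w)" "distinct bs"
    using finite_distinct_list[of "- insert k (Supp w)"] by auto
  define as where "as = sort_key (\<lambda>i. - \<bar>w $ i\<bar>) xs"
  have as: "set as = Supp w" "distinct as" using xs by (simp_all add: as_def)
  have "sorted (map (\<lambda>i. - \<bar>w $ i\<bar>) as)" by (simp add: as_def)
  then have sorted_as: "sorted_wrt (\<lambda>i j. vec_abs w $ j \<le> vec_abs w $ i) as"
    by (simp add: sorted_map vec_abs_def)
  have zero: "vec_abs w $ i = 0" if "i \<in> set (k # bs)" for i
    using that assms bs(1) by (auto simp: vec_abs_def Supp_def)
  have nonneg: "0 \<le> vec_abs w $ i" for i by (simp add: vec_abs_def)
  have sorted_rest: "sorted_wrt (\<lambda>i j. vec_abs w $ j \<le> vec_abs w $ i) (k # bs)"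
    unfolding sorted_wrt_iff_nth_less
  proof (intro allI impI)
    fix a b assume "a < b" "b < length (k # bs)"
    then have "vec_abs w $ ((k # bs) ! b) = 0" by (intro zero nth_mem)
    then show "vec_abs w $ ((k # bs) ! b) \<le> vec_abs w $ ((k # bs) ! a)"
      using nonneg[of "(k # bs) ! a"] by linarith
  qed
  have "distinct (as @ k # bs)" and "set (as @ k # bs) = UNIV"
    using as bs assms by auto
  with sorted_as sorted_rest zero nonneg have "decreasing_order (vec_abs w) (as @ k # bs)"
    unfolding decreasing_order_def by (simp add: sorted_wrt_append)
  then show ?thesis using as(1) by blast
qed

lemma eventually_sgn_along_line:
  fixes w z :: "real ^ 'p::finite"
  shows "eventually (\<lambda>t. \<forall>i\<in>Supp w. sgn ((w + t *\<^sub>R z) $ i) = sgn (w $ i)) (nhds 0)"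
proof (rule eventually_ball_finite, simp, rule ballI)
  fix i assume "i \<in> Supp w"
  have lim: "((\<lambda>t. (w + t *\<^sub>R z) $ i) \<longlongrightarrow> w $ i) (nhds 0)"
    by (auto intro!: tendsto_eq_intros filterlim_ident)
  show "eventually (\<lambda>t. sgn ((w + t *\<^sub>R z) $ i) = sgn (w $ i)) (nhds 0)"
  proof (cases "w $ i > 0")
    case True
    from order_tendstoD(1)[OF lim True] show ?thesis by eventually_elim (use True in simp)
  next
    case False
    then have "w $ i < 0" using \<open>i \<in> Supp w\<close> by (simp add: Supp_def)
    from order_tendstoD(2)[OF lim this] show ?thesis by eventually_elim (use \<open>w $ i < 0\<close> in simp)
  qed
qed

lemma eventually_abs_le_along_line:
  fixes w z :: "real ^ 'p::finite"
  assumes "i \<in> Supp w" and "\<bar>w $ j\<bar> \<le> \<bar>w $ i\<bar>"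
    and ties: "\<bar>w $ j\<bar> = \<bar>w $ i\<bar> \<Longrightarrow> sgn (w $ i) * z $ i = sgn (w $ j) * z $ j"
  shows "eventually (\<lambda>t. \<bar>(w + t *\<^sub>R z) $ j\<bar> \<le> \<bar>(w + t *\<^sub>R z) $ i\<bar>) (nhds 0)"
proof (cases "\<bar>w $ j\<bar> < \<bar>w $ i\<bar>")
  case True
  have "((\<lambda>t. \<bar>(w + t *\<^sub>R z) $ i\<bar> - \<bar>(w + t *\<^sub>R z) $ j\<bar>) \<longlongrightarrow> \<bar>w $ i\<bar> - \<bar>w $ j\<bar>) (nhds 0)"
    by (auto intro!: tendsto_eq_intros filterlim_ident)
  then have "eventually (\<lambda>t. 0 < \<bar>(w + t *\<^sub>R z) $ i\<bar> - \<bar>(w + t *\<^sub>R z) $ j\<bar>) (nhds 0)"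
    using True by (intro order_tendstoD(1)) auto
  then show ?thesis by eventually_elim simp
next
  case False
  then have eq: "\<bar>w $ j\<bar> = \<bar>w $ i\<bar>" using assms(2) by simp
  then have "j \<in> Supp w" using \<open>i \<in> Supp w\<close> by (simp add: Supp_def)
  from eventually_sgn_along_line[of w z] show ?thesis
  proof eventually_elim
    case (elim t)
    have "\<bar>(w + t *\<^sub>R z) $ j\<bar> = sgn (w $ j) * (w + t *\<^sub>R z) $ j"
      using elim \<open>j \<in> Supp w\<close> by (metis abs_sgn mult.commute)
    also have "\<dots> = \<bar>w $ j\<bar> + t * (sgn (w $ j) * z $ j)"
      by (simp add: algebra_simps abs_sgn)
    also have "\<dots> = \<bar>w $ i\<bar> + t * (sgn (w $ i) * z $ i)" using eq ties by simp
    also have "\<dots> = sgn (w $ i) * (w + t *\<^sub>R z) $ i"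
      by (simp add: algebra_simps abs_sgn)
    also have "\<dots> = \<bar>(w + t *\<^sub>R z) $ i\<bar>"
      using elim \<open>i \<in> Supp w\<close> by (metis abs_sgn mult.commute)
    finally show ?case by simp
  qed
qed

lemma eventually_abs_order_along_line:
  fixes w z :: "real ^ 'p::finite"
  assumes ties: "\<And>i j. i \<in> Supp w \<Longrightarrow> j \<in> Supp w \<Longrightarrow> \<bar>w $ i\<bar> = \<bar>w $ j\<bar> \<Longrightarrow>
      sgn (w $ i) * z $ i = sgn (w $ j) * z $ j"
  shows "eventually (\<lambda>t. \<forall>i\<in>Supp w. \<forall>j. \<bar>w $ j\<bar> \<le> \<bar>w $ i\<bar> \<longrightarrow>
      \<bar>(w + t *\<^sub>R z) $ j\<bar> \<le> \<bar>(w + t *\<^sub>R z) $ i\<bar>) (nhds 0)"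
proof (rule eventually_ball_finite)
  show "\<forall>i\<in>Supp w. eventually (\<lambda>t. \<forall>j. \<bar>w $ j\<bar> \<le> \<bar>w $ i\<bar> \<longrightarrow>
      \<bar>(w + t *\<^sub>R z) $ j\<bar> \<le> \<bar>(w + t *\<^sub>R z) $ i\<bar>) (nhds 0)"
  proof
    fix i assume "i \<in> Supp w"
    have "eventually (\<lambda>t. \<bar>w $ j\<bar> \<le> \<bar>w $ i\<bar> \<longrightarrow>
        \<bar>(w + t *\<^sub>R z) $ j\<bar> \<le> \<bar>(w + t *\<^sub>R z) $ i\<bar>) (nhds 0)" for j
    proof (cases "\<bar>w $ j\<bar> \<le> \<bar>w $ i\<bar>")
      case True
      have "sgn (w $ i) * z $ i = sgn (w $ j) * z $ j" if "\<bar>w $ j\<bar> = \<bar>w $ i\<bar>"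
        using ties[of i j] \<open>i \<in> Supp w\<close> that by (auto simp: Supp_def)
      then show ?thesis
        using eventually_abs_le_along_line[OF \<open>i \<in> Supp w\<close> True] by (auto elim: eventually_mono)
    qed simp
    then show "eventually (\<lambda>t. \<forall>j. \<bar>w $ j\<bar> \<le> \<bar>w $ i\<bar> \<longrightarrow>
        \<bar>(w + t *\<^sub>R z) $ j\<bar> \<le> \<bar>(w + t *\<^sub>R z) $ i\<bar>) (nhds 0)"
      by (rule eventually_all_finite)
  qed
qed simp

lemma decreasing_order_support_prefix:
  fixes u v :: "real ^ 'p::finite"
  assumes ord: "decreasing_order (vec_abs u) (as @ k # bs)" and supp: "set as = Supp u"
    and dominated: "\<And>i j. i \<in> Supp u \<Longrightarrow> \<bar>u $ j\<bar> \<le> \<bar>u $ i\<bar> \<Longrightarrow> \<bar>v $ j\<bar> \<le> \<bar>v $ i\<bar>"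
    and zero: "\<And>j. j \<in> set bs \<Longrightarrow> v $ j = 0"
  shows "decreasing_order (vec_abs v) (as @ k # bs)"
proof -
  have sorted: "sorted_wrt (\<lambda>i j. \<bar>u $ j\<bar> \<le> \<bar>u $ i\<bar>) as"
      "sorted_wrt (\<lambda>i j. \<bar>u $ j\<bar> \<le> \<bar>u $ i\<bar>) bs"
    using ord by (simp_all add: decreasing_order_def vec_abs_def sorted_wrt_append)
  have outside: "i \<notin> Supp u" if "i \<in> set (k # bs)" for i
    using that ord supp by (auto simp: decreasing_order_def)
  have "sorted_wrt (\<lambda>i j. vec_abs v $ j \<le> vec_abs v $ i) as"
    using supp dominated by (intro sorted_wrt_mono_rel[OF _ sorted(1)]) (simp add: vec_abs_def)
  moreover have "\<forall>i\<in>set as. \<forall>j\<in>set (k # bs). vec_abs v $ j \<le> vec_abs v $ i"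
  proof (intro ballI)
    fix i j assume "i \<in> set as" "j \<in> set (k # bs)"
    moreover have "\<bar>u $ j\<bar> \<le> \<bar>u $ i\<bar>"
      using outside[OF \<open>j \<in> set (k # bs)\<close>] by (simp add: Supp_def)
    ultimately show "vec_abs v $ j \<le> vec_abs v $ i" using supp dominated by (simp add: vec_abs_def)
  qed
  moreover have "sorted_wrt (\<lambda>i j. vec_abs v $ j \<le> vec_abs v $ i) (k # bs)"
    using zero by (simp add: vec_abs_def sorted_wrt_mono_rel[OF _ sorted(2)])
  ultimately have "sorted_wrt (\<lambda>i j. vec_abs v $ j \<le> vec_abs v $ i) (as @ k # bs)"
    unfolding sorted_wrt_append by blast
  then show ?thesis using ord unfolding decreasing_order_def by blast
qed

lemma eventually_decreasing_order_along_line: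
  fixes w z :: "real ^ 'p::finite"
  assumes ord: "decreasing_order (vec_abs w) (as @ k # bs)" and supp: "set as = Supp w"
    and off: "\<And>i. i \<notin> Supp w \<Longrightarrow> i \<noteq> k \<Longrightarrow> z $ i = 0"
    and ties: "\<And>i j. i \<in> Supp w \<Longrightarrow> j \<in> Supp w \<Longrightarrow> \<bar>w $ i\<bar> = \<bar>w $ j\<bar> \<Longrightarrow>
      sgn (w $ i) * z $ i = sgn (w $ j) * z $ j"
  shows "eventually (\<lambda>t. decreasing_order (vec_abs (w + t *\<^sub>R z)) (as @ k # bs)) (nhds 0)"
proof -
  have "(w + t *\<^sub>R z) $ j = 0" if "j \<in> set bs" for t j
  proof -
    have "j \<notin> Supp w" "j \<noteq> k" using that ord supp by (auto simp: decreasing_order_def)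
    then show ?thesis using off[of j] by (simp add: Supp_def)
  qed
  moreover have "eventually (\<lambda>t. \<forall>i\<in>Supp w. \<forall>j. \<bar>w $ j\<bar> \<le> \<bar>w $ i\<bar> \<longrightarrow>
      \<bar>(w + t *\<^sub>R z) $ j\<bar> \<le> \<bar>(w + t *\<^sub>R z) $ i\<bar>) (nhds 0)"
    using ties by (rule eventually_abs_order_along_line)
  ultimately show ?thesis
    by (auto elim!: eventually_mono intro: decreasing_order_support_prefix[OF ord supp])
qed

context
  fixes F :: "'p::finite set \<Rightarrow> real"
  assumes sub: "submodular F" and mono: "nondecreasing_setfun F" and F0: "F {} = 0"
begin

lemma Omega_affine_along_line:
  fixes w z :: "real ^ 'p"
  assumes ord: "decreasing_order (vec_abs w) (as @ k # bs)" and supp: "set as = Supp w"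
    and off: "\<And>i. i \<notin> Supp w \<Longrightarrow> i \<noteq> k \<Longrightarrow> z $ i = 0"
    and ties: "\<And>i j. i \<in> Supp w \<Longrightarrow> j \<in> Supp w \<Longrightarrow> \<bar>w $ i\<bar> = \<bar>w $ j\<bar> \<Longrightarrow>
      sgn (w $ i) * z $ i = sgn (w $ j) * z $ j"
    and redundant: "F (insert k (Supp w)) = F (Supp w)"
  shows "eventually (\<lambda>t. Omega F (w + t *\<^sub>R z) = Omega F w +
    t * ((\<chi> i. sgn (w $ i) * greedy_vector F (as @ k # bs) $ i) \<bullet> z)) (nhds 0)"
proof -
  define js where "js = as @ k # bs"
  define h where "h = (\<chi> i. sgn (w $ i) * greedy_vector F js $ i)"
  have "k \<notin> set as" using ord by (simp add: decreasing_order_def)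
  then have "takeWhile (\<lambda>j. j \<noteq> k) js = as" unfolding js_def by (induction as) auto
  then have "greedy_vector F js $ k = 0"
    using redundant supp by (simp add: greedy_vector_def)
  then have Omega_linear: "Omega F v = h \<bullet> v"
    if "decreasing_order (vec_abs v) js" and sgn: "\<forall>i\<in>Supp w. sgn (v $ i) = sgn (w $ i)"
      and "\<And>i. i \<notin> Supp w \<Longrightarrow> i \<noteq> k \<Longrightarrow> v $ i = 0" for v
  proof -
    have "\<bar>v $ i\<bar> * greedy_vector F js $ i = h $ i * v $ i" for i
      using sgn[rule_format, of i] that(3)[of i] \<open>greedy_vector F js $ k = 0\<close>
      by (cases "i \<in> Supp w") (auto simp: h_def Supp_def abs_sgn)
    then show ?thesis
      using Omega_eq_sum[OF sub mono F0 that(1)] by (simp add: inner_vec_def)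
  qed
  have "Omega F w = h \<bullet> w"
    using ord by (intro Omega_linear) (auto simp: js_def Supp_def)
  moreover have "eventually (\<lambda>t. decreasing_order (vec_abs (w + t *\<^sub>R z)) js) (nhds 0)"
    unfolding js_def using ord supp off ties by (rule eventually_decreasing_order_along_line)
  with eventually_sgn_along_line[of w z]
  have "eventually (\<lambda>t. Omega F (w + t *\<^sub>R z) = h \<bullet> (w + t *\<^sub>R z)) (nhds 0)"
  proof eventually_elim
    case (elim t)
    then show ?case
      using off by (intro Omega_linear) (auto simp: Supp_def)
  qed
  ultimately show ?thesis
    by (simp add: h_def js_def inner_add_right)
qed

end

lemma minimizer_stationary_along_line:
  fixes X :: "real ^ 'p::finite ^ 'n::finite"
  assumes min: "is_minimizer F X lam y w"
    and affine: "eventually (\<lambda>t. Omega F (w + t *\<^sub>R z) = Omega F w + t * a) (nhds 0)"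
  shows "(X *v z) \<bullet> (y - X *v w) = real CARD('n) * lam * a"
proof -
  define c where "c = 1 / (2 * real CARD('n))"
  define r where "r = y - X *v w"
  define u where "u = X *v z"
  define q where "q t = c * ((norm r)\<^sup>2 - 2 * t * (r \<bullet> u) + t\<^sup>2 * (norm u)\<^sup>2) + lam * (Omega F w + t * a)"
    for t :: real
  have residual: "(norm (y - X *v (w + t *\<^sub>R z)))\<^sup>2 = (norm r)\<^sup>2 - 2 * t * (r \<bullet> u) + t\<^sup>2 * (norm u)\<^sup>2" for t
  proof -
    have "y - X *v (w + t *\<^sub>R z) = r - t *\<^sub>R u"
      by (simp add: r_def u_def matrix_vector_right_distrib matrix_vector_mult_scaleR)
    then show ?thesis
      by (simp only: power2_norm_eq_inner) (simp add: inner_diff inner_commute algebra_simps power2_eq_square)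
  qed
  from affine have "eventually (\<lambda>t. q 0 \<le> q t) (nhds 0)"
  proof eventually_elim
    case (elim t)
    have "q 0 = objective F X lam y w" by (simp add: q_def objective_def c_def r_def)
    also have "\<dots> \<le> objective F X lam y (w + t *\<^sub>R z)" using min by (simp add: is_minimizer_def)
    also have "\<dots> = q t" using elim by (simp add: q_def objective_def c_def residual)
    finally show ?case .
  qed
  then obtain d where "d > 0" and "\<forall>t. \<bar>0 - t\<bar> < d \<longrightarrow> q 0 \<le> q t"
    by (auto simp: eventually_nhds_metric dist_real_def)
  moreover have "(q has_real_derivative lam * a - 2 * c * (r \<bullet> u)) (at 0)"
    unfolding q_def by (auto intro!: derivative_eq_intros)
  ultimately have "lam * a - 2 * c * (r \<bullet> u) = 0" by (intro DERIV_local_min) auto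
  then show ?thesis by (simp add: c_def r_def u_def field_simps inner_commute)
qed

lemma unstable_support_imp_exceptional:
  fixes F :: "'p::finite set \<Rightarrow> real" and X :: "real ^ 'p ^ 'n::finite"
  assumes sub: "submodular F" and mono: "nondecreasing_setfun F" and F0: "F {} = 0"
    and min: "is_minimizer F X lam y w" and unstable: "\<not> stable_set F (Supp w)"
  shows "y \<in> exceptional_responses F X lam"
proof -
  obtain k where k: "k \<notin> Supp w" and redundant: "F (insert k (Supp w)) = F (Supp w)"
    using exists_redundant_element[OF mono unstable] by blast
  obtain as bs where ord: "decreasing_order (vec_abs w) (as @ k # bs)" and supp: "set as = Supp w"
    using decreasing_order_support_first[OF k] by blast
  define P where "P = {i. 0 < w $ i}"
  define E where "E = {(i, j). \<bar>w $ i\<bar> = \<bar>w $ j\<bar>}"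
  define \<sigma> where "\<sigma> = sign_pattern (Supp w) P"
  define z where "z = escape_direction X \<sigma> E k"
  define h where "h = (\<chi> i. \<sigma> $ i * greedy_vector F (as @ k # bs) $ i)"
  have \<sigma>: "\<sigma> = (\<chi> i. sgn (w $ i))" by (simp add: \<sigma>_def P_def sign_pattern_Supp)
  have "z - axis k 1 \<in> tie_space \<sigma> E" unfolding z_def by (rule escape_direction(1))
  note direction = sgn_tie_space_axis_shiftD[OF this[unfolded \<sigma> E_def] k]
  have "eventually (\<lambda>t. Omega F (w + t *\<^sub>R z) = Omega F w +
      t * ((\<chi> i. sgn (w $ i) * greedy_vector F (as @ k # bs) $ i) \<bullet> z)) (nhds 0)"
    by (rule Omega_affine_along_line[OF sub mono F0 ord supp direction redundant])
  then have "(X *v z) \<bullet> (y - X *v w) = real CARD('n) * lam * (h \<bullet> z)"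
    unfolding h_def \<sigma> vec_lambda_beta by (rule minimizer_stationary_along_line[OF min])
  moreover have "(X *v z) \<bullet> (X *v w) = 0"
    unfolding z_def using sgn_tie_space[of w] by (intro escape_direction(2)) (simp add: \<sigma> E_def)
  ultimately have "y \<in> stationary_hyperplane F X lam \<sigma> E k (as @ k # bs)"
    by (simp add: stationary_hyperplane_def z_def[symmetric] h_def[symmetric] inner_diff_right)
  then show ?thesis
    unfolding exceptional_responses_def \<sigma>_def using k
    by (intro UN_I[of "Supp w"] UN_I[of P] UN_I[of E] UN_I[of k] UN_I[of "as @ k # bs"]) auto
qed

theorem proposition5:
  fixes F :: "'p::finite set \<Rightarrow> real"
    and X :: "real ^ 'p ^ 'n::finite"
    and lam :: real
    and M :: "'s measure"
    and Y :: "'s \<Rightarrow> real ^ 'n"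
  assumes "submodular F"
    and "nondecreasing_setfun F"
    and "F {} = 0"
    and "\<And>k. F {k} > 0"
    and "invertible (transpose X ** X)"
    and "lam > 0"
    and "prob_space M"
    and "Y \<in> borel_measurable M"
    and "absolutely_continuous lborel (distr M borel Y)"
  shows "(\<forall>y. \<exists>!w. is_minimizer F X lam y w) \<and>
         (AE \<omega> in M. stable_set F (Supp (THE w. is_minimizer F X lam (Y \<omega>) w)))"
proof
  have ex1: "\<exists>!w. is_minimizer F X lam y w" for y
    by (rule ex1_minimizer[OF assms(1-6)])
  then show "\<forall>y. \<exists>!w. is_minimizer F X lam y w" ..
  have "exceptional_responses F X lam \<in> null_sets (distr M borel Y)"
    using exceptional_responses_null[OF assms(5)] assms(9) unfolding absolutely_continuous_def by blast
  then have "Y -` exceptional_responses F X lam \<inter> space M \<in> null_sets M"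
    using null_sets_distr_iff[OF assms(8)] by blast
  moreover have "\<not> stable_set F (Supp (THE w. is_minimizer F X lam (Y \<omega>) w)) \<Longrightarrow>
      Y \<omega> \<in> exceptional_responses F X lam" for \<omega>
    using unstable_support_imp_exceptional[OF assms(1-3) theI'[OF ex1]] .
  ultimately show "AE \<omega> in M. stable_set F (Supp (THE w. is_minimizer F X lam (Y \<omega>) w))"
    by (auto intro: AE_I')
qed

end
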